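(* Let $q\ge2$ and $L\ge2$ be integers, let $\mathcal{C}\subseteq[q]^n$ be a code, and suppose the matrix $\varphi(\mathcal{C})/\sqrt{(q-1)n}$ satisfies RIP-2 of order $L$ with constant $1/2$. Then for every set of $L$ distinct codewords $c_1,\dots,c_L\in\mathcal{C}$, the average pairwise relative distance $\binom{L}{2}^{-1}\sum_{1\le i<j\le L}\delta(c_i,c_j)$ is at least $\big(1-\frac1q\big)\big(1-\frac{1}{2(L-1)}\big)$.
   Context: $[q]=\{0,1,\dots,q-1\}$; $\delta(x,y)$ is the fraction of coordinates where $x,y\in[q]^n$ differ. Simplex encoding: for $x\in[q]$, $\varphi(x)\in\mathbb{C}^{q-1}$ has coordinates $\varphi(x)(\alpha)=\omega^{x\alpha}$ for $\alpha\in\{1,\dots,q-1\}$, $\omega=e^{2\pi\mathbf{i}/q}$; for $x\in[q]^n$, $\varphi(x)\in\mathbb{C}^{n(q-1)}$ is the concatenation of $\varphi(x_1),\dots,\varphi(x_n)$. For a code $\mathcal{C}\subseteq[q]^n$, $\varphi(\mathcal{C})$ is the $(q-1)n\times|\mathcal{C}|$ complex matrix whose columns are indexed by $c\in\mathcal{C}$, the column for $c$ being $\varphi(c)$. A matrix $M\in\mathbb{C}^{m\times N}$ satisfies RIP-2 of order $k$ with constant $\delta$ if for every $x\in\mathbb{C}^N$ with at most $k$ nonzero entries, $(1-\delta)\|x\|_2^2\le\|Mx\|_2^2\le(1+\delta)\|x\|_2^2$ (Euclidean norms). *)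

theory Defs
  imports "HOL-Analysis.Analysis"
begin

definition words :: "nat \<Rightarrow> nat \<Rightarrow> nat list set" where
  "words q n = {xs. length xs = n \<and> (\<forall>a\<in>set xs. a < q)}"

definition rel_dist :: "nat list \<Rightarrow> nat list \<Rightarrow> real" where
  "rel_dist x y = real (card {i. i < length x \<and> x ! i \<noteq> y ! i}) / real (length x)"

text \<open>Simplex encoding: coordinate (i, alpha), with i < n and 1 \<le> alpha \<le> q-1,
  of phi(x) is omega^(x_i * alpha), omega = exp(2 pi i / q).\<close>
definition simplex_enc :: "nat \<Rightarrow> nat list \<Rightarrow> nat \<times> nat \<Rightarrow> complex" where
  "simplex_enc q x r = exp (2 * pi * \<i> * of_nat (x ! fst r * snd r) / of_nat q)"

definition simplex_rows :: "nat \<Rightarrow> nat \<Rightarrow> (nat \<times> nat) set" where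
  "simplex_rows q n = {..<n} \<times> {1..q-1}"

text \<open>RIP-2 of order k with constant d for the matrix with row index set R and
  column index set Cols, whose column indexed by c is M c.\<close>
definition rip2 :: "'r set \<Rightarrow> 'c set \<Rightarrow> ('c \<Rightarrow> 'r \<Rightarrow> complex) \<Rightarrow> nat \<Rightarrow> real \<Rightarrow> bool" where
  "rip2 R Cols M k d \<longleftrightarrow>
     (\<forall>x :: 'c \<Rightarrow> complex. card {c\<in>Cols. x c \<noteq> 0} \<le> k \<longrightarrow>
        (1 - d) * (\<Sum>c\<in>Cols. (cmod (x c))\<^sup>2) \<le> (\<Sum>r\<in>R. (cmod (\<Sum>c\<in>Cols. M c r * x c))\<^sup>2) \<and>
        (\<Sum>r\<in>R. (cmod (\<Sum>c\<in>Cols. M c r * x c))\<^sup>2) \<le> (1 + d) * (\<Sum>c\<in>Cols. (cmod (x c))\<^sup>2))"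

end

theory Submission
  imports Defs
begin

text \<open>Apply the upper RIP bound to the indicator vector of the \<open>L\<close> codewords. The
  squared norm of the sum of their simplex encodings is the sum of all pairwise inner products,
  and for words of length \<open>n\<close> that inner product is \<open>(q-1)n - qn \<delta>(u,v)\<close>, because the
  character sum \<open>\<Sum>\<^sub>\<alpha> \<omega>\<^bsup>(a-b)\<alpha>\<^esup>\<close> over \<open>\<alpha> = 1..q-1\<close> is \<open>q-1\<close> if \<open>a = b\<close> and \<open>-1\<close> otherwise.
  So \<open>L\<^sup>2(q-1)n - 2qn \<Sum>\<^bsub>i<j\<^esub> \<delta>(c\<^sub>i,c\<^sub>j) \<le> (3/2) L (q-1)n\<close>, which rearranges to the bound.\<close>

lemma exp_two_pi_i_mult_divide_power:
  "exp (2 * pi * \<i> * of_nat (a * m) / of_nat q) = exp (2 * pi * \<i> * of_nat a / of_nat q) ^ m"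
  by (simp add: exp_of_nat_mult[symmetric] mult_ac)

lemma sum_powers_root_unity:
  fixes z :: "'a :: field"
  assumes "z ^ q = 1" "q \<ge> 1"
  shows "(\<Sum>\<alpha>\<in>{1..q-1}. z ^ \<alpha>) = (if z = 1 then of_nat (q - 1) else -1)"
proof -
  have "{..<q} = insert 0 {1..q-1}" using assms(2) by auto
  then have "(\<Sum>\<alpha>\<in>{1..q-1}. z ^ \<alpha>) = (\<Sum>\<alpha><q. z ^ \<alpha>) - 1" by simp
  also have "\<dots> = (if z = 1 then of_nat q - 1 else -1)"
    using assms(1) by (simp add: sum_gp_strict)
  finally show ?thesis using assms(2) by simp
qed

lemma simplex_enc_symbol_inner:
  fixes a b q :: nat
  assumes "a < q" "b < q"
  shows "(\<Sum>\<alpha>\<in>{1..q-1}. exp (2 * pi * \<i> * of_nat (a * \<alpha>) / of_nat q) *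
            cnj (exp (2 * pi * \<i> * of_nat (b * \<alpha>) / of_nat q)))
         = (if a = b then of_nat (q - 1) else -1)"
proof -
  define \<omega> where "\<omega> k = exp (2 * pi * \<i> * of_nat k / of_nat q)" for k
  have q: "q \<ge> 1" using assms by simp
  have cnj_\<omega>: "cnj (\<omega> k) * \<omega> k = 1" for k
    unfolding \<omega>_def by (simp add: exp_cnj exp_add[symmetric])
  define z where "z = \<omega> a * cnj (\<omega> b)"
  have "z ^ q = \<omega> a ^ q * cnj (\<omega> b ^ q)"
    by (simp add: z_def power_mult_distrib)
  also have "\<dots> = 1"
    using complex_root_unity[of q] q by (simp add: \<omega>_def)
  finally have zq: "z ^ q = 1" .
  have "z = 1 \<longleftrightarrow> \<omega> a = \<omega> b"
    by (metis cnj_\<omega> mult.assoc mult.commute mult_1_right z_def)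
  also have "\<dots> \<longleftrightarrow> a = b"
    using complex_root_unity_eq[OF q, of a b] assms by (simp add: \<omega>_def)
  finally have z1: "z = 1 \<longleftrightarrow> a = b" .
  have "exp (2 * pi * \<i> * of_nat (a * \<alpha>) / of_nat q) *
          cnj (exp (2 * pi * \<i> * of_nat (b * \<alpha>) / of_nat q)) = z ^ \<alpha>" for \<alpha>
    by (simp only: exp_two_pi_i_mult_divide_power z_def \<omega>_def power_mult_distrib complex_cnj_power)
  then show ?thesis using sum_powers_root_unity[OF zq q] z1 by simp
qed

lemma finite_words: "finite (words q n)"
proof -
  have "words q n = {xs. set xs \<subseteq> {..<q} \<and> length xs = n}" unfolding words_def by auto
  then show ?thesis using finite_lists_length_eq[of "{..<q}" n] by simp
qed

lemma words_0: "words q 0 = {[]}"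
  unfolding words_def by auto

lemma rel_dist_self [simp]: "rel_dist x x = 0"
  unfolding rel_dist_def by simp

lemma rel_dist_commute: "length x = length y \<Longrightarrow> rel_dist x y = rel_dist y x"
  unfolding rel_dist_def by (simp add: eq_commute)

lemma card_diff_positions_eq_rel_dist:
  "real (card {i. i < length x \<and> x ! i \<noteq> y ! i}) = real (length x) * rel_dist x y"
  unfolding rel_dist_def by (cases "length x = 0") auto

lemma simplex_enc_inner:
  assumes "u \<in> words q n" "v \<in> words q n"
  shows "(\<Sum>r\<in>simplex_rows q n. simplex_enc q u r * cnj (simplex_enc q v r))
       = of_real (real ((q - 1) * n) - real q * real n * rel_dist u v)"
proof -
  have len: "length u = n" and u: "\<And>i. i < n \<Longrightarrow> u ! i < q" and v: "\<And>i. i < n \<Longrightarrow> v ! i < q"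
    using assms unfolding words_def by auto
  have "(\<Sum>r\<in>simplex_rows q n. simplex_enc q u r * cnj (simplex_enc q v r))
      = (\<Sum>i<n. \<Sum>\<alpha>\<in>{1..q-1}. simplex_enc q u (i, \<alpha>) * cnj (simplex_enc q v (i, \<alpha>)))"
    unfolding simplex_rows_def by (simp add: sum.cartesian_product)
  also have "\<dots> = (\<Sum>i<n. if u ! i = v ! i then of_nat (q - 1) else -1)"
    unfolding simplex_enc_def using simplex_enc_symbol_inner[OF u v] by simp
  also have "\<dots> = (\<Sum>i<n. of_nat (q - 1) - of_nat q * of_bool (u ! i \<noteq> v ! i))"
  proof (intro sum.cong refl)
    fix i assume "i \<in> {..<n}"
    then have "q \<ge> 1" using u by fastforce
    then show "(if u ! i = v ! i then of_nat (q - 1) else -1) =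
        of_nat (q - 1) - (of_nat q :: complex) * of_bool (u ! i \<noteq> v ! i)"
      by simp
  qed
  also have "\<dots> = of_nat n * of_nat (q - 1) - of_nat q * of_nat (card ({..<n} \<inter> {i. u ! i \<noteq> v ! i}))"
    by (simp add: sum_subtractf sum_distrib_left[symmetric])
  also have "{..<n} \<inter> {i. u ! i \<noteq> v ! i} = {i. i < length u \<and> u ! i \<noteq> v ! i}"
    using len by auto
  also have "(of_nat (card {i. i < length u \<and> u ! i \<noteq> v ! i}) :: complex) = of_real (real n * rel_dist u v)"
    using card_diff_positions_eq_rel_dist[of u v] len by (metis of_real_of_nat_eq)
  finally show ?thesis by simp
qed

lemma sum_cmod_sum_squared_eq_gram:
  fixes e :: "'i \<Rightarrow> 'r \<Rightarrow> complex"
  shows "of_real (\<Sum>r\<in>R. (cmod (\<Sum>i\<in>I. e i r))\<^sup>2) = (\<Sum>i\<in>I. \<Sum>j\<in>I. \<Sum>r\<in>R. e i r * cnj (e j r))"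
proof -
  have "of_real (\<Sum>r\<in>R. (cmod (\<Sum>i\<in>I. e i r))\<^sup>2) = (\<Sum>r\<in>R. (\<Sum>i\<in>I. e i r) * cnj (\<Sum>j\<in>I. e j r))"
    by (simp only: of_real_sum complex_norm_square)
  also have "\<dots> = (\<Sum>r\<in>R. \<Sum>i\<in>I. \<Sum>j\<in>I. e i r * cnj (e j r))"
    by (simp add: sum_product cnj_sum)
  also have "\<dots> = (\<Sum>i\<in>I. \<Sum>r\<in>R. \<Sum>j\<in>I. e i r * cnj (e j r))"
    by (rule sum.swap)
  also have "\<dots> = (\<Sum>i\<in>I. \<Sum>j\<in>I. \<Sum>r\<in>R. e i r * cnj (e j r))"
    by (rule sum.cong[OF refl], rule sum.swap)
  finally show ?thesis .
qed

lemma sum_square_eq_twice_sum_upper: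
  fixes f :: "nat \<Rightarrow> nat \<Rightarrow> 'a :: comm_semiring_1"
  assumes "\<And>i j. i < L \<Longrightarrow> j < L \<Longrightarrow> f i j = f j i" and "\<And>i. f i i = 0"
  shows "(\<Sum>i<L. \<Sum>j<L. f i j) = 2 * (\<Sum>i<L. \<Sum>j\<in>{i<..<L}. f i j)"
  using assms(1)
proof (induction L)
  case 0
  then show ?case by simp
next
  case (Suc L)
  have "{L<..<Suc L} = {}"
    by auto
  have upper: "{i<..<Suc L} = insert L {i<..<L}" if "i < L" for i
    using that by auto
  have "(\<Sum>i<Suc L. \<Sum>j\<in>{i<..<Suc L}. f i j) = (\<Sum>i<L. \<Sum>j\<in>{i<..<L}. f i j) + (\<Sum>i<L. f i L)"
    by (simp add: upper sum.distrib add.commute \<open>{L<..<Suc L} = {}\<close>)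
  moreover have "(\<Sum>j<L. f L j) = (\<Sum>i<L. f i L)"
    using Suc.prems by simp
  ultimately show ?case
    using Suc by (simp add: sum.distrib assms(2) algebra_simps mult_2)
qed

lemma norm_sum_simplex_enc_squared:
  assumes "\<And>i. i < L \<Longrightarrow> c i \<in> words q n"
  shows "(\<Sum>r\<in>simplex_rows q n. (cmod (\<Sum>i<L. simplex_enc q (c i) r))\<^sup>2)
       = real L ^ 2 * real ((q - 1) * n) - 2 * real q * real n * (\<Sum>i<L. \<Sum>j\<in>{i<..<L}. rel_dist (c i) (c j))"
proof -
  have "complex_of_real (\<Sum>r\<in>simplex_rows q n. (cmod (\<Sum>i<L. simplex_enc q (c i) r))\<^sup>2)
      = of_real (\<Sum>i<L. \<Sum>j<L. real ((q - 1) * n) - real q * real n * rel_dist (c i) (c j))"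
    unfolding sum_cmod_sum_squared_eq_gram of_real_sum using assms by (simp add: simplex_enc_inner)
  then have "(\<Sum>r\<in>simplex_rows q n. (cmod (\<Sum>i<L. simplex_enc q (c i) r))\<^sup>2)
      = (\<Sum>i<L. \<Sum>j<L. real ((q - 1) * n) - real q * real n * rel_dist (c i) (c j))"
    by (rule of_real_eq_iff[THEN iffD1])
  also have "\<dots> = real L ^ 2 * real ((q - 1) * n) - real q * real n * (\<Sum>i<L. \<Sum>j<L. rel_dist (c i) (c j))"
    by (simp add: sum_subtractf sum_distrib_left power2_eq_square)
  also have "(\<Sum>i<L. \<Sum>j<L. rel_dist (c i) (c j)) = 2 * (\<Sum>i<L. \<Sum>j\<in>{i<..<L}. rel_dist (c i) (c j))"
  proof (rule sum_square_eq_twice_sum_upper)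
    show "rel_dist (c i) (c j) = rel_dist (c j) (c i)" if "i < L" "j < L" for i j
      using assms[OF that(1)] assms[OF that(2)] by (intro rel_dist_commute) (simp add: words_def)
  qed simp
  finally show ?thesis by simp
qed

lemma rip2_upper_bound_indicator:
  assumes rip: "rip2 R Cols M k d" and "finite Cols"
    and inj: "inj_on c I" and sub: "c ` I \<subseteq> Cols" and "card I \<le> k"
  shows "(\<Sum>r\<in>R. (cmod (\<Sum>i\<in>I. M (c i) r))\<^sup>2) \<le> (1 + d) * card I"
proof -
  define x where "x w = (of_bool (w \<in> c ` I) :: complex)" for w
  have supp: "{w\<in>Cols. x w \<noteq> 0} = c ` I"
    using sub by (auto simp: x_def)
  have "(\<Sum>w\<in>Cols. M w r * x w) = (\<Sum>w\<in>c ` I. M w r)" for r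
    using sub \<open>finite Cols\<close> by (simp add: x_def Int_absorb1 flip: Int_def)
  also have "\<dots> r = (\<Sum>i\<in>I. M (c i) r)" for r
    using inj by (simp add: sum.reindex)
  finally have col: "(\<Sum>w\<in>Cols. M w r * x w) = (\<Sum>i\<in>I. M (c i) r)" for r .
  have "(cmod (x w))\<^sup>2 = of_bool (w \<in> c ` I)" for w
    by (simp add: x_def)
  then have "(\<Sum>w\<in>Cols. (cmod (x w))\<^sup>2) = card (c ` I)"
    using sub \<open>finite Cols\<close> by (simp add: Int_absorb1 flip: Int_def)
  with inj have norm_x: "(\<Sum>w\<in>Cols. (cmod (x w))\<^sup>2) = card I"
    by (simp add: card_image)
  have "card {w\<in>Cols. x w \<noteq> 0} \<le> k"
    using supp inj \<open>card I \<le> k\<close> by (simp add: card_image)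
  then have "(\<Sum>r\<in>R. (cmod (\<Sum>w\<in>Cols. M w r * x w))\<^sup>2) \<le> (1 + d) * (\<Sum>w\<in>Cols. (cmod (x w))\<^sup>2)"
    using rip unfolding rip2_def by blast
  then show ?thesis
    by (simp only: col norm_x)
qed

lemma rip2_normalized_upper_bound:
  assumes "rip2 R Cols (\<lambda>w r. M w r / of_real (sqrt a)) k d" "a > 0" "finite Cols"
    and "inj_on c I" "c ` I \<subseteq> Cols" "card I \<le> k"
  shows "(\<Sum>r\<in>R. (cmod (\<Sum>i\<in>I. M (c i) r))\<^sup>2) \<le> (1 + d) * a * card I"
proof -
  have "(\<Sum>r\<in>R. (cmod (\<Sum>i\<in>I. M (c i) r / of_real (sqrt a)))\<^sup>2)
      = (\<Sum>r\<in>R. (cmod (\<Sum>i\<in>I. M (c i) r))\<^sup>2) / a"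
    using \<open>a > 0\<close> by (simp add: sum_divide_distrib[symmetric] norm_divide power_divide)
  moreover have "(\<Sum>r\<in>R. (cmod (\<Sum>i\<in>I. M (c i) r / of_real (sqrt a)))\<^sup>2) \<le> (1 + d) * card I"
    using rip2_upper_bound_indicator[OF assms(1,3-)] by simp
  ultimately show ?thesis
    using \<open>a > 0\<close> by (simp add: divide_le_eq mult_ac)
qed

lemma length_pos_of_inj_words:
  fixes c :: "nat \<Rightarrow> nat list"
  assumes "inj_on c {..<L}" "c ` {..<L} \<subseteq> words q n" "L \<ge> 2"
  shows "n > 0"
proof (rule ccontr)
  assume "\<not> n > 0"
  then have "c 0 = c 1"
    using assms(2,3) by (simp add: words_0 image_subset_iff)
  then show False
    using inj_onD[OF assms(1), of 0 1] \<open>L \<ge> 2\<close> by simp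
qed

lemma pair_average_lower_bound:
  fixes S :: real
  assumes "q \<ge> 2" "L \<ge> 2"
    and "real L ^ 2 * (real q - 1) - 2 * real q * S \<le> 3/2 * (real q - 1) * real L"
  shows "S / real (L choose 2) \<ge> (1 - 1 / real q) * (1 - 1 / (2 * (real L - 1)))"
proof -
  have choose: "real (L choose 2) = real L * (real L - 1) / 2"
    using \<open>L \<ge> 2\<close> by (simp add: choose_two real_of_nat_div of_nat_diff)
  have "(1 - 1 / real q) * (1 - 1 / (2 * (real L - 1))) * real (L choose 2)
      = (real q - 1) * real L * (2 * real L - 3) / (4 * real q)"
    unfolding choose using assms(1,2) by (simp add: field_simps)
  also have "\<dots> \<le> S"
    using assms(1,3) by (simp add: field_simps power2_eq_square)
  finally show ?thesis
    using \<open>L \<ge> 2\<close> unfolding choose by (simp add: le_divide_eq)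
qed

theorem lemma3p4:
  fixes q L n :: nat and C :: "nat list set" and c :: "nat \<Rightarrow> nat list"
  assumes "q \<ge> 2" and "L \<ge> 2"
    and "C \<subseteq> words q n"
    and "rip2 (simplex_rows q n) C
           (\<lambda>w r. simplex_enc q w r / complex_of_real (sqrt (real ((q - 1) * n)))) L (1/2)"
    and "inj_on c {..<L}" and "c ` {..<L} \<subseteq> C"
  shows "(\<Sum>i<L. \<Sum>j\<in>{i<..<L}. rel_dist (c i) (c j)) / real (L choose 2)
           \<ge> (1 - 1 / real q) * (1 - 1 / (2 * (real L - 1)))"
proof -
  define S where "S = (\<Sum>i<L. \<Sum>j\<in>{i<..<L}. rel_dist (c i) (c j))"
  have words: "c ` {..<L} \<subseteq> words q n"
    using assms(3,6) by auto
  have "n > 0"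
    using length_pos_of_inj_words[OF assms(5) words \<open>L \<ge> 2\<close>] .
  have "real L ^ 2 * real ((q - 1) * n) - 2 * real q * real n * S \<le> (1 + 1/2) * real ((q - 1) * n) * L"
    using norm_sum_simplex_enc_squared[of L c q n] words
      rip2_normalized_upper_bound[OF assms(4) _ finite_subset[OF assms(3) finite_words] assms(5,6)]
      \<open>n > 0\<close> \<open>q \<ge> 2\<close>
    by (simp add: S_def image_subset_iff)
  then have "real n * (real L ^ 2 * (real q - 1) - 2 * real q * S) \<le> real n * (3/2 * (real q - 1) * L)"
    using \<open>q \<ge> 2\<close> by (simp add: of_nat_diff algebra_simps)
  then have "real L ^ 2 * (real q - 1) - 2 * real q * S \<le> 3/2 * (real q - 1) * L"
    using \<open>n > 0\<close> by simp
  then show ?thesis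
    using pair_average_lower_bound[OF assms(1,2)] unfolding S_def by blast
qed

end
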